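(* Let $A_1A_2A_3$ and $B_1B_2B_3$ be triangles in the real projective plane that are perspective from a point $S$, i.e. the three lines $A_1B_1$, $A_2B_2$, $A_3B_3$ pass through $S$. For every permutation $(i,j,k)$ of $(1,2,3)$ let $P_{ij}$ be the intersection point of the lines $A_iA_k$ and $B_jB_k$, and let $C_k$ be the intersection point of the lines $P_{ik}P_{ki}$ and $P_{jk}P_{kj}$. (The configuration is assumed to be in general position, so that all these points and lines are well defined.) Then the triangle $C_1C_2C_3$ is perspective from the point $S$ to the triangle $A_1A_2A_3$ and to the triangle $B_1B_2B_3$; that is, for each $k\in\{1,2,3\}$ the points $S$, $A_k$, $B_k$, $C_k$ are collinear.
   Context: Two configurations with a correspondence between their points are said to be perspective from a point $O$ if all lines joining corresponding points pass through $O$. *)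

theory Defs
  imports "HOL-Analysis.Analysis"
begin

text \<open>Real projective plane via homogeneous coordinates: a point (or a line) is
represented by a nonzero vector of real^3, determined up to a nonzero scalar.
Point p lies on line l iff l \<bullet> p = 0.\<close>

definition proj_distinct :: "real^3 \<Rightarrow> real^3 \<Rightarrow> bool" where
  "proj_distinct p q \<longleftrightarrow> cross3 p q \<noteq> 0"

definition join :: "real^3 \<Rightarrow> real^3 \<Rightarrow> real^3" where
  "join p q = cross3 p q"

definition meet :: "real^3 \<Rightarrow> real^3 \<Rightarrow> real^3" where
  "meet l m = cross3 l m"

definition on_line :: "real^3 \<Rightarrow> real^3 \<Rightarrow> bool" where
  "on_line p l \<longleftrightarrow> l \<bullet> p = 0"

definition proj_collinear :: "(real^3) set \<Rightarrow> bool" where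
  "proj_collinear X \<longleftrightarrow> (\<exists>l. l \<noteq> 0 \<and> (\<forall>p\<in>X. on_line p l))"

definition third :: "nat \<Rightarrow> nat \<Rightarrow> nat" where
  "third i j = 6 - i - j"

definition Ppt :: "(nat \<Rightarrow> real^3) \<Rightarrow> (nat \<Rightarrow> real^3) \<Rightarrow> nat \<Rightarrow> nat \<Rightarrow> real^3" where
  "Ppt A B i j = meet (join (A i) (A (third i j))) (join (B j) (B (third i j)))"

end

theory Submission
  imports Defs
begin

text \<open>Perspectivity, the points P and C, and incidence are all preserved by an invertible
linear change of homogeneous coordinates. Taking A_i, A_j, A_k as the standard frame, the
perspectivity from S says B_m = \<alpha>_m e_m + \<gamma>_m S, and the incidence of C_k with the
line A_k B_k becomes a polynomial identity in S and the six coefficients. Hence only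
S \<noteq> A_m and the non-collinearity of the A_m are needed from the general position
hypotheses: a degenerate join or meet is the zero vector, which lies on every line.\<close>

unbundle cross3_syntax

text \<open>frame_point a b c sends the standard basis to a, b, c; frame_line a b c is its
cofactor map, by which it acts on lines.\<close>

definition frame_point :: "real^3 \<Rightarrow> real^3 \<Rightarrow> real^3 \<Rightarrow> real^3 \<Rightarrow> real^3" where
  "frame_point a b c u = u$1 *\<^sub>R a + u$2 *\<^sub>R b + u$3 *\<^sub>R c"

definition frame_line :: "real^3 \<Rightarrow> real^3 \<Rightarrow> real^3 \<Rightarrow> real^3 \<Rightarrow> real^3" where
  "frame_line a b c u = u$1 *\<^sub>R (b \<times> c) + u$2 *\<^sub>R (c \<times> a) + u$3 *\<^sub>R (a \<times> b)"

lemma cross_frame_point: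
  "frame_point a b c u \<times> frame_point a b c v = frame_line a b c (u \<times> v)"
  unfolding frame_point_def frame_line_def by (simp add: cross3_simps forall_3)

lemma cross_frame_line:
  "frame_line a b c u \<times> frame_line a b c v = (a \<bullet> (b \<times> c)) *\<^sub>R frame_point a b c (u \<times> v)"
  unfolding frame_point_def frame_line_def by (simp add: cross3_simps forall_3)

lemma inner_frame_line_point:
  "frame_line a b c u \<bullet> frame_point a b c v = (a \<bullet> (b \<times> c)) * (u \<bullet> v)"
  unfolding frame_point_def frame_line_def by (simp add: cross3_simps forall_3)

lemma frame_point_basis:
  "frame_point a b c (vector [1, 0, 0]) = a"
  "frame_point a b c (vector [0, 1, 0]) = b"
  "frame_point a b c (vector [0, 0, 1]) = c"
  unfolding frame_point_def by simp_all

lemma frame_point_Cramer: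
  "(a \<bullet> (b \<times> c)) *\<^sub>R x = frame_point a b c (vector [x \<bullet> (b \<times> c), a \<bullet> (x \<times> c), a \<bullet> (b \<times> x)])"
  unfolding frame_point_def by (simp add: cross3_simps forall_3)

lemma frame_point_surj:
  assumes "a \<bullet> (b \<times> c) \<noteq> 0"
  obtains u where "x = frame_point a b c u"
proof
  let ?d = "a \<bullet> (b \<times> c)"
  let ?v = "vector [x \<bullet> (b \<times> c), a \<bullet> (x \<times> c), a \<bullet> (b \<times> x)] :: real^3"
  have "x = (1 / ?d) *\<^sub>R (?d *\<^sub>R x)"
    using assms by simp
  also have "\<dots> = frame_point a b c ((1 / ?d) *\<^sub>R ?v)"
    unfolding frame_point_Cramer by (simp add: frame_point_def scaleR_add_right)
  finally show "x = frame_point a b c ((1 / ?d) *\<^sub>R ?v)" .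
qed

lemma frame_point_combination:
  "frame_point a b c (\<alpha> *\<^sub>R u + \<gamma> *\<^sub>R v) = \<alpha> *\<^sub>R frame_point a b c u + \<gamma> *\<^sub>R frame_point a b c v"
  unfolding frame_point_def by (simp add: algebra_simps)

lemma on_line_join_imp_combination:
  fixes s x y :: "real^3"
  assumes "proj_distinct s x" and "on_line s (join x y)"
  obtains \<alpha> \<gamma> where "y = \<alpha> *\<^sub>R x + \<gamma> *\<^sub>R s"
proof
  let ?n = "x \<times> s"
  let ?\<alpha> = "y \<bullet> (s \<times> ?n)" and ?\<gamma> = "x \<bullet> (y \<times> ?n)"
  have "?n \<noteq> 0"
    using assms(1) cross_skew[of s x] unfolding proj_distinct_def by simp
  \<comment> \<open>expand y in the basis x, s, x \<times> s; the normal component vanishes since s lies on x y\<close>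
  have "?n \<bullet> y = - ((x \<times> y) \<bullet> s)"
    by (simp add: cross3_simps)
  moreover have "(?n \<bullet> ?n) *\<^sub>R y = (?n \<bullet> y) *\<^sub>R ?n + ?\<alpha> *\<^sub>R x + ?\<gamma> *\<^sub>R s"
    by (simp add: cross3_simps forall_3)
  ultimately have expand: "(?n \<bullet> ?n) *\<^sub>R y = ?\<alpha> *\<^sub>R x + ?\<gamma> *\<^sub>R s"
    using assms(2) unfolding on_line_def join_def by simp
  have "y = inverse (?n \<bullet> ?n) *\<^sub>R ((?n \<bullet> ?n) *\<^sub>R y)"
    using \<open>?n \<noteq> 0\<close> by simp
  also have "\<dots> = (?\<alpha> / (?n \<bullet> ?n)) *\<^sub>R x + (?\<gamma> / (?n \<bullet> ?n)) *\<^sub>R s"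
    unfolding expand by (simp add: scaleR_add_right divide_inverse_commute)
  finally show "y = (?\<alpha> / (?n \<bullet> ?n)) *\<^sub>R x + (?\<gamma> / (?n \<bullet> ?n)) *\<^sub>R s" .
qed

text \<open>The point C_k of the configuration for (i, j, k) = (a, b, c), with a', b', c' standing
for B_i, B_j, B_k.\<close>

definition C_point :: "real^3 \<Rightarrow> real^3 \<Rightarrow> real^3 \<Rightarrow> real^3 \<Rightarrow> real^3 \<Rightarrow> real^3 \<Rightarrow> real^3" where
  "C_point a b c a' b' c' =
     meet (join (meet (join a b) (join c' b')) (meet (join c b) (join a' b')))
          (join (meet (join b a) (join c' a')) (meet (join c a) (join b' a')))"

lemma on_line_C_point_frame_iff:
  assumes "a \<bullet> (b \<times> c) \<noteq> 0"
  shows "on_line (C_point (frame_point a b c u1) (frame_point a b c u2) (frame_point a b c u3)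
                   (frame_point a b c v1) (frame_point a b c v2) (frame_point a b c v3))
           (join (frame_point a b c u3) (frame_point a b c v3))
         \<longleftrightarrow> on_line (C_point u1 u2 u3 v1 v2 v3) (join u3 v3)"
  using assms unfolding C_point_def on_line_def join_def meet_def
  by (simp add: cross_frame_point cross_frame_line inner_frame_line_point
      cross_mult_left cross_mult_right)

lemma on_line_C_point_std_frame:
  fixes s :: "real^3" and \<alpha>1 \<alpha>2 \<alpha>3 \<gamma>1 \<gamma>2 \<gamma>3 :: real
  defines "e1 \<equiv> vector [1, 0, 0]" and "e2 \<equiv> vector [0, 1, 0]" and "e3 \<equiv> vector [0, 0, 1]"
  shows "on_line (C_point e1 e2 e3 (\<alpha>1 *\<^sub>R e1 + \<gamma>1 *\<^sub>R s) (\<alpha>2 *\<^sub>R e2 + \<gamma>2 *\<^sub>R s) (\<alpha>3 *\<^sub>R e3 + \<gamma>3 *\<^sub>R s))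
           (join e3 (\<alpha>3 *\<^sub>R e3 + \<gamma>3 *\<^sub>R s))"
  unfolding C_point_def on_line_def join_def meet_def e1_def e2_def e3_def
  by (simp add: cross3_simps)

lemma on_line_C_point:
  assumes "a \<bullet> (b \<times> c) \<noteq> 0"
    and "proj_distinct s a" "on_line s (join a a')"
    and "proj_distinct s b" "on_line s (join b b')"
    and "proj_distinct s c" "on_line s (join c c')"
  shows "on_line (C_point a b c a' b' c') (join c c')"
proof -
  let ?P = "frame_point a b c"
  let ?e1 = "vector [1, 0, 0] :: real^3" and ?e2 = "vector [0, 1, 0] :: real^3"
    and ?e3 = "vector [0, 0, 1] :: real^3"
  obtain \<sigma> where s: "s = ?P \<sigma>"
    using frame_point_surj assms(1) by blast
  obtain \<alpha>1 \<gamma>1 \<alpha>2 \<gamma>2 \<alpha>3 \<gamma>3 where coords: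
    "a' = \<alpha>1 *\<^sub>R a + \<gamma>1 *\<^sub>R s" "b' = \<alpha>2 *\<^sub>R b + \<gamma>2 *\<^sub>R s" "c' = \<alpha>3 *\<^sub>R c + \<gamma>3 *\<^sub>R s"
    by (metis assms(2-7) on_line_join_imp_combination)
  have "on_line (C_point (?P ?e1) (?P ?e2) (?P ?e3) (?P (\<alpha>1 *\<^sub>R ?e1 + \<gamma>1 *\<^sub>R \<sigma>))
           (?P (\<alpha>2 *\<^sub>R ?e2 + \<gamma>2 *\<^sub>R \<sigma>)) (?P (\<alpha>3 *\<^sub>R ?e3 + \<gamma>3 *\<^sub>R \<sigma>)))
          (join (?P ?e3) (?P (\<alpha>3 *\<^sub>R ?e3 + \<gamma>3 *\<^sub>R \<sigma>)))"
    unfolding on_line_C_point_frame_iff[OF assms(1)] by (rule on_line_C_point_std_frame)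
  then show ?thesis
    by (simp only: frame_point_basis frame_point_combination s[symmetric] coords[symmetric])
qed

lemma not_proj_collinear_imp_triple_product_nonzero:
  fixes a b c :: "real^3"
  assumes "\<not> proj_collinear {a, b, c}"
  shows "a \<bullet> (b \<times> c) \<noteq> 0"
proof
  let ?M = "vector [a, b, c] :: real^3^3"
  assume "a \<bullet> (b \<times> c) = 0"
  then have "\<not> invertible ?M"
    by (simp add: dot_cross_det invertible_det_nz)
  then obtain l where "l \<noteq> 0" "?M *v l = 0"
    by (metis invertible_left_inverse matrix_left_invertible_ker)
  moreover have "?M *v l = vector [a \<bullet> l, b \<bullet> l, c \<bullet> l]"
    by (simp add: matrix_vector_mult_def vec_eq_iff forall_3 inner_vec_def sum_3)
  ultimately have "l \<noteq> 0 \<and> (\<forall>p\<in>{a, b, c}. on_line p l)"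
    by (simp add: vec_eq_iff forall_3 on_line_def inner_commute)
  then show False
    using assms unfolding proj_collinear_def by blast
qed

lemma proj_collinear_join:
  assumes "proj_distinct p q" and "on_line x (join p q)" and "on_line y (join p q)"
  shows "proj_collinear {x, p, q, y}"
  unfolding proj_collinear_def
proof (intro exI conjI)
  show "join p q \<noteq> 0"
    using assms(1) unfolding proj_distinct_def join_def .
  show "\<forall>z\<in>{x, p, q, y}. on_line z (join p q)"
    using assms(2,3) by (simp add: on_line_def join_def dot_cross_self inner_commute)
qed

theorem theorem1:
  fixes A B :: "nat \<Rightarrow> real^3" and S :: "real^3"
  assumes nz: "S \<noteq> 0" "\<forall>k\<in>{1,2,3}. A k \<noteq> 0 \<and> B k \<noteq> 0"
    and triA: "\<not> proj_collinear {A 1, A 2, A 3}"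
    and triB: "\<not> proj_collinear {B 1, B 2, B 3}"
    and persp: "\<forall>k\<in>{1,2,3}. proj_distinct (A k) (B k) \<and> on_line S (join (A k) (B k))"
    and genS: "\<forall>k\<in>{1,2,3}. proj_distinct S (A k) \<and> proj_distinct S (B k)"
    and genP: "\<forall>i j k. {i,j,k} = {1,2,3} \<longrightarrow>
                 proj_distinct (join (A i) (A k)) (join (B j) (B k))"
    and genL: "\<forall>i j k. {i,j,k} = {1,2,3} \<longrightarrow>
                 proj_distinct (Ppt A B i k) (Ppt A B k i)"
    and genC: "\<forall>i j k. {i,j,k} = {1,2,3} \<longrightarrow>
                 proj_distinct (join (Ppt A B i k) (Ppt A B k i))
                               (join (Ppt A B j k) (Ppt A B k j))"
  shows "\<forall>i j k. {i,j,k} = {1,2,3} \<longrightarrow>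
           proj_collinear {S, A k, B k,
             meet (join (Ppt A B i k) (Ppt A B k i)) (join (Ppt A B j k) (Ppt A B k j))}"
proof (intro allI impI)
  fix i j k :: nat
  assume ijk: "{i, j, k} = {1, 2, 3}"
  then have idx: "i \<in> {1, 2, 3}" "j \<in> {1, 2, 3}" "k \<in> {1, 2, 3}"
    by blast+
  have "card {i, j, k} = 3"
    using ijk by simp
  then have "i \<noteq> j" "i \<noteq> k" "j \<noteq> k"
    by (auto simp: card_insert_if split: if_splits)
  then have C: "meet (join (Ppt A B i k) (Ppt A B k i)) (join (Ppt A B j k) (Ppt A B k j))
      = C_point (A i) (A j) (A k) (B i) (B j) (B k)"
    using idx by (auto simp: Ppt_def C_point_def third_def)
  have "{A i, A j, A k} = {A 1, A 2, A 3}"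
    by (metis ijk image_empty image_insert)
  then have "A i \<bullet> (A j \<times> A k) \<noteq> 0"
    using triA not_proj_collinear_imp_triple_product_nonzero by metis
  then have "on_line (C_point (A i) (A j) (A k) (B i) (B j) (B k)) (join (A k) (B k))"
    using idx persp genS by (intro on_line_C_point) auto
  then show "proj_collinear {S, A k, B k,
      meet (join (Ppt A B i k) (Ppt A B k i)) (join (Ppt A B j k) (Ppt A B k j))}"
    unfolding C using idx persp by (intro proj_collinear_join) auto
qed

end
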